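(* Let $(X_t)_{t\in Z^m}$ be a definable family of subsets of $R^n$ indexed by $Z^m$. Then $\{X_t:t\in Z^m\}$ is finite. More generally, if $X$ is an $R$-internal definable set and $Y$ is a $Z$-internal definable set (definable in $(Z,R)^{eq}$), then for any definable family $(X_t)_{t\in Y}$ of subsets of $X$, the set $\{X_t:t\in Y\}$ is finite.
   Context: Let $\mathfrak C$ be a monster model, $Z,R$ definable subsets of $\mathfrak C$ which are stably embedded (subsets of $Z^n$, resp. $R^n$, definable with parameters from $\mathfrak C$ are definable with parameters from $Z$, resp. $R$) and fully orthogonal (for all $m,n$, every definable subset of $Z^m\times R^n$ is a finite union of sets $U\times V$ with $U\subseteq Z^m$, $V\subseteq R^n$ definable). $(Z,R)^{eq}$ is the two-sorted structure $(Z,R)$ (no connection between the sorts) expanded by all imaginary sorts; "definable" means definable in $(Z,R)^{eq}$ with parameters. A definable set $X$ is $Z$-internal (resp. $R$-internal) if there is a definable surjection from $Z^k$ (resp. $R^k$) onto $X$ for some $k$. *)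

theory Defs
  imports Main
begin

datatype 'f trm = Var nat | Fn 'f "'f trm list"

datatype ('f, 'r) fm =
    Eq "'f trm" "'f trm"
  | Rel 'r "'f trm list"
  | Neg "('f, 'r) fm"
  | Conj "('f, 'r) fm" "('f, 'r) fm"
  | Ex nat "('f, 'r) fm"

text \<open>A structure with universe UNIV :: 'a is given by interpretations
  F of the function symbols and Rl of the relation symbols.\<close>

fun evalt :: "('f \<Rightarrow> 'a list \<Rightarrow> 'a) \<Rightarrow> (nat \<Rightarrow> 'a) \<Rightarrow> 'f trm \<Rightarrow> 'a" where
  "evalt F v (Var i) = v i"
| "evalt F v (Fn f ts) = F f (map (evalt F v) ts)"

fun sat :: "('f \<Rightarrow> 'a list \<Rightarrow> 'a) \<Rightarrow> ('r \<Rightarrow> 'a list \<Rightarrow> bool) \<Rightarrow> (nat \<Rightarrow> 'a)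
             \<Rightarrow> ('f, 'r) fm \<Rightarrow> bool" where
  "sat F Rl v (Eq s t) = (evalt F v s = evalt F v t)"
| "sat F Rl v (Rel r ts) = Rl r (map (evalt F v) ts)"
| "sat F Rl v (Neg \<phi>) = (\<not> sat F Rl v \<phi>)"
| "sat F Rl v (Conj \<phi> \<psi>) = (sat F Rl v \<phi> \<and> sat F Rl v \<psi>)"
| "sat F Rl v (Ex i \<phi>) = (\<exists>a. sat F Rl (v(i := a)) \<phi>)"

definition env :: "'a list \<Rightarrow> nat \<Rightarrow> 'a" where
  "env xs i = (if i < length xs then xs ! i else undefined)"

definition definable_over ::
  "('f \<Rightarrow> 'a list \<Rightarrow> 'a) \<Rightarrow> ('r \<Rightarrow> 'a list \<Rightarrow> bool) \<Rightarrow> 'a set \<Rightarrow> nat \<Rightarrow> 'a list set \<Rightarrow> bool" where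
  "definable_over F Rl A n S \<longleftrightarrow> S \<subseteq> {xs. length xs = n} \<and>
     (\<exists>(\<phi> :: ('f, 'r) fm) ps. set ps \<subseteq> A \<and>
        (\<forall>xs. length xs = n \<longrightarrow> (xs \<in> S \<longleftrightarrow> sat F Rl (env (xs @ ps)) \<phi>)))"

abbreviation definable where
  "definable F Rl n S \<equiv> definable_over F Rl UNIV n S"

definition lpow :: "'a set \<Rightarrow> nat \<Rightarrow> 'a list set" where
  "lpow A n = {xs. length xs = n \<and> set xs \<subseteq> A}"

definition lprod :: "'a list set \<Rightarrow> 'a list set \<Rightarrow> 'a list set" where
  "lprod A B = {xs @ ys | xs ys. xs \<in> A \<and> ys \<in> B}"

definition stably_embedded where
  "stably_embedded F Rl A \<longleftrightarrow>
     (\<forall>n S. definable F Rl n S \<and> S \<subseteq> lpow A n \<longrightarrow> definable_over F Rl A n S)"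

definition fully_orthogonal where
  "fully_orthogonal F Rl Z R \<longleftrightarrow>
     (\<forall>m n S. definable F Rl (m + n) S \<and> S \<subseteq> lprod (lpow Z m) (lpow R n) \<longrightarrow>
        (\<exists>P. finite P \<and>
           (\<forall>(U, V) \<in> P. definable F Rl m U \<and> U \<subseteq> lpow Z m \<and>
                          definable F Rl n V \<and> V \<subseteq> lpow R n) \<and>
           S = (\<Union>(U, V) \<in> P. lprod U V)))"

text \<open>Product of sorts given by a pattern: True = sort Z, False = sort R.\<close>
definition sortprod :: "'a set \<Rightarrow> 'a set \<Rightarrow> bool list \<Rightarrow> 'a list set" where
  "sortprod Z R pat = {xs. length xs = length pat \<and>
      (\<forall>i < length pat. xs ! i \<in> (if pat ! i then Z else R))}"

text \<open>A definable set of (Z,R)^eq, represented as D // E with D a definable subset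
  of a product of the sorts Z, R and E a definable equivalence relation on D.\<close>
definition eq_set where
  "eq_set F Rl Z R pat D E \<longleftrightarrow>
     D \<subseteq> sortprod Z R pat \<and> definable F Rl (length pat) D \<and> equiv D E \<and>
     definable F Rl (2 * length pat) {x @ y | x y. (x, y) \<in> E}"

text \<open>A-internal: there is a definable surjection from A^k onto D // E
  (its graph is given by the definable preimage G in A^k x D).\<close>
definition internal where
  "internal F Rl Z R A pat D E \<longleftrightarrow> eq_set F Rl Z R pat D E \<and>
     (\<exists>k G. definable F Rl (k + length pat) G \<and> G \<subseteq> lprod (lpow A k) D \<and>
        (\<forall>s \<in> lpow A k. {y. s @ y \<in> G} \<in> D // E) \<and>
        (\<forall>c \<in> D // E. \<exists>s \<in> lpow A k. {y. s @ y \<in> G} = c))"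

definition eq_family where
  "eq_family F Rl pY DY EqY pX DX EqX Xf \<longleftrightarrow>
     (\<forall>t \<in> DY // EqY. Xf t \<subseteq> DX // EqX) \<and>
     definable F Rl (length pY + length pX)
       {y @ x | y x. y \<in> DY \<and> x \<in> DX \<and> EqX `` {x} \<in> Xf (EqY `` {y})}"

end

theory Submission
  imports Defs
begin

text \<open>By full orthogonality a definable
  S \<subseteq> Z^m \<times> R^n is a finite union of boxes U_i \<times> V_i, so the fibre of S over t is the union
  of those V_i with t \<in> U_i and is determined by a subset of a fixed finite index set.
  In the imaginary case a definable family (X_c) indexed by Y is pulled back along the
  internality surjections Z^l \<rightarrow> Y and R^k \<rightarrow> X to a definable subset of Z^l \<times> R^k,
  and each X_c is the image of a fibre of that set.\<close>

definition prefix_env :: "'a list \<Rightarrow> (nat \<Rightarrow> 'a) \<Rightarrow> nat \<Rightarrow> 'a" where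
  "prefix_env xs w i = (if i < length xs then xs ! i else w (i - length xs))"

lemma env_append_eq_prefix_env: "env (xs @ ps) = prefix_env xs (env ps)"
  by (auto simp: fun_eq_iff env_def prefix_env_def nth_append)

fun rename_trm :: "(nat \<Rightarrow> nat) \<Rightarrow> 'f trm \<Rightarrow> 'f trm" where
  "rename_trm \<rho> (Var i) = Var (\<rho> i)"
| "rename_trm \<rho> (Fn f ts) = Fn f (map (rename_trm \<rho>) ts)"

fun rename_fm :: "(nat \<Rightarrow> nat) \<Rightarrow> ('f, 'r) fm \<Rightarrow> ('f, 'r) fm" where
  "rename_fm \<rho> (Eq s t) = Eq (rename_trm \<rho> s) (rename_trm \<rho> t)"
| "rename_fm \<rho> (Rel r ts) = Rel r (map (rename_trm \<rho>) ts)"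
| "rename_fm \<rho> (Neg \<phi>) = Neg (rename_fm \<rho> \<phi>)"
| "rename_fm \<rho> (Conj \<phi> \<psi>) = Conj (rename_fm \<rho> \<phi>) (rename_fm \<rho> \<psi>)"
| "rename_fm \<rho> (Ex i \<phi>) = Ex (\<rho> i) (rename_fm \<rho> \<phi>)"

lemma evalt_rename_trm: "evalt F v (rename_trm \<rho> t) = evalt F (v \<circ> \<rho>) t"
  by (induction t) (simp_all add: comp_def cong: map_cong)

lemma sat_rename_fm: "inj \<rho> \<Longrightarrow> sat F Rl v (rename_fm \<rho> \<phi>) = sat F Rl (v \<circ> \<rho>) \<phi>"
proof (induction \<phi> arbitrary: v)
  case (Ex i \<phi>)
  have "\<And>a. (v(\<rho> i := a)) \<circ> \<rho> = (v \<circ> \<rho>)(i := a)"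
    using Ex.prems by (auto simp: fun_eq_iff inj_eq)
  then show ?case using Ex.IH[OF Ex.prems] by (simp only: rename_fm.simps sat.simps)
qed (auto simp: evalt_rename_trm comp_def)

text \<open>Exceeds every variable index occurring in a term or formula, bound occurrences included.\<close>

fun var_bound_trm :: "'f trm \<Rightarrow> nat" where
  "var_bound_trm (Var i) = Suc i"
| "var_bound_trm (Fn f ts) = sum_list (map var_bound_trm ts)"

fun var_bound :: "('f, 'r) fm \<Rightarrow> nat" where
  "var_bound (Eq s t) = var_bound_trm s + var_bound_trm t"
| "var_bound (Rel r ts) = sum_list (map var_bound_trm ts)"
| "var_bound (Neg \<phi>) = var_bound \<phi>"
| "var_bound (Conj \<phi> \<psi>) = var_bound \<phi> + var_bound \<psi>"
| "var_bound (Ex i \<phi>) = Suc i + var_bound \<phi>"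

lemma evalt_cong_var_bound:
  "\<forall>i < var_bound_trm t. v i = v' i \<Longrightarrow> evalt F v t = evalt F v' t"
proof (induction t)
  case (Fn f ts)
  have "evalt F v t = evalt F v' t" if "t \<in> set ts" for t
    using Fn.IH[OF that] Fn.prems member_le_sum_list[of "var_bound_trm t" "map var_bound_trm ts"]
      that by simp
  then show ?case by (simp cong: map_cong)
qed simp

lemma sat_cong_var_bound:
  "\<forall>i < var_bound \<phi>. v i = v' i \<Longrightarrow> sat F Rl v \<phi> = sat F Rl v' \<phi>"
proof (induction \<phi> arbitrary: v v')
  case (Eq s t)
  then show ?case using evalt_cong_var_bound[of s v v' F] evalt_cong_var_bound[of t v v' F] by simp
next
  case (Rel r ts)
  have "evalt F v t = evalt F v' t" if "t \<in> set ts" for t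
    using evalt_cong_var_bound[of t v v' F] Rel.prems
      member_le_sum_list[of "var_bound_trm t" "map var_bound_trm ts"] that by simp
  then show ?case by (simp cong: map_cong)
next
  case (Neg \<phi>)
  then show ?case by simp
next
  case (Conj \<phi> \<psi>)
  have "sat F Rl v \<phi> = sat F Rl v' \<phi>" using Conj.prems by (intro Conj.IH(1)) simp
  moreover have "sat F Rl v \<psi> = sat F Rl v' \<psi>" using Conj.prems by (intro Conj.IH(2)) simp
  ultimately show ?case by simp
next
  case (Ex i \<phi>)
  have "sat F Rl (v(i := a)) \<phi> = sat F Rl (v'(i := a)) \<phi>" for a
    by (rule Ex.IH) (use Ex.prems in simp)
  then show ?case by simp
qed

text \<open>Definability with the parameters supplied by an arbitrary valuation of the
  variables beyond the first n; this form is closed under the operations needed below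
  without any bookkeeping of parameter lists.\<close>

definition definable_param ::
  "('f \<Rightarrow> 'a list \<Rightarrow> 'a) \<Rightarrow> ('r \<Rightarrow> 'a list \<Rightarrow> bool) \<Rightarrow> nat \<Rightarrow> 'a list set \<Rightarrow> bool" where
  "definable_param F Rl n S \<longleftrightarrow> (\<exists>(\<phi> :: ('f, 'r) fm) w.
     \<forall>xs. length xs = n \<longrightarrow> (xs \<in> S \<longleftrightarrow> sat F Rl (prefix_env xs w) \<phi>))"

lemma definable_iff_definable_param:
  fixes F :: "'f \<Rightarrow> 'a list \<Rightarrow> 'a" and Rl :: "'r \<Rightarrow> 'a list \<Rightarrow> bool"
  shows "definable F Rl n S \<longleftrightarrow> S \<subseteq> {xs. length xs = n} \<and> definable_param F Rl n S"
proof
  assume "definable F Rl n S"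
  then show "S \<subseteq> {xs. length xs = n} \<and> definable_param F Rl n S"
    unfolding definable_over_def definable_param_def env_append_eq_prefix_env by blast
next
  assume S: "S \<subseteq> {xs. length xs = n} \<and> definable_param F Rl n S"
  then obtain \<phi> :: "('f, 'r) fm" and w
    where \<phi>: "\<And>xs. length xs = n \<Longrightarrow> xs \<in> S \<longleftrightarrow> sat F Rl (prefix_env xs w) \<phi>"
    unfolding definable_param_def by blast
  define ps where "ps = map w [0..<var_bound \<phi>]"
  have "sat F Rl (env (xs @ ps)) \<phi> = sat F Rl (prefix_env xs w) \<phi>" if "length xs = n" for xs
    by (rule sat_cong_var_bound) (auto simp: env_def prefix_env_def nth_append ps_def that)
  with \<phi> S show "definable F Rl n S"
    unfolding definable_over_def by (auto intro!: exI[of _ \<phi>] exI[of _ ps])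
qed

lemma definable_param_Int:
  fixes F :: "'f \<Rightarrow> 'a list \<Rightarrow> 'a" and Rl :: "'r \<Rightarrow> 'a list \<Rightarrow> bool"
  assumes "definable_param F Rl n A" "definable_param F Rl n B"
  shows "definable_param F Rl n (A \<inter> B)"
proof -
  obtain \<phi>A :: "('f, 'r) fm" and wA
    where A: "\<And>xs. length xs = n \<Longrightarrow> xs \<in> A \<longleftrightarrow> sat F Rl (prefix_env xs wA) \<phi>A"
    using assms(1) unfolding definable_param_def by blast
  obtain \<phi>B :: "('f, 'r) fm" and wB
    where B: "\<And>xs. length xs = n \<Longrightarrow> xs \<in> B \<longleftrightarrow> sat F Rl (prefix_env xs wB) \<phi>B"
    using assms(2) unfolding definable_param_def by blast
  \<comment> \<open>the parameters of the two formulas are interleaved on the even and odd slots\<close>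
  define \<rho>A where "\<rho>A i = (if i < n then i else n + 2 * (i - n))" for i
  define \<rho>B where "\<rho>B i = (if i < n then i else n + 2 * (i - n) + 1)" for i
  define w where "w j = (if even j then wA (j div 2) else wB (j div 2))" for j
  have "inj \<rho>A" "inj \<rho>B" unfolding inj_def \<rho>A_def \<rho>B_def by auto
  moreover have "prefix_env xs w \<circ> \<rho>A = prefix_env xs wA"
    "prefix_env xs w \<circ> \<rho>B = prefix_env xs wB" if "length xs = n" for xs :: "'a list"
    by (auto simp: fun_eq_iff prefix_env_def \<rho>A_def \<rho>B_def w_def that)
  ultimately have "xs \<in> A \<inter> B \<longleftrightarrow>
      sat F Rl (prefix_env xs w) (Conj (rename_fm \<rho>A \<phi>A) (rename_fm \<rho>B \<phi>B))"
    if "length xs = n" for xs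
    using A B that by (simp add: sat_rename_fm)
  then show ?thesis unfolding definable_param_def by blast
qed

lemma definable_param_preimage:
  fixes F :: "'f \<Rightarrow> 'a list \<Rightarrow> 'a" and Rl :: "'r \<Rightarrow> 'a list \<Rightarrow> bool"
  assumes "definable_param F Rl (length \<sigma>) S" "distinct \<sigma>" "\<forall>j \<in> set \<sigma>. j < N"
  shows "definable_param F Rl N {v. map ((!) v) \<sigma> \<in> S}"
proof -
  obtain \<phi> :: "('f, 'r) fm" and w
    where \<phi>: "\<And>xs. length xs = length \<sigma> \<Longrightarrow> xs \<in> S \<longleftrightarrow> sat F Rl (prefix_env xs w) \<phi>"
    using assms(1) unfolding definable_param_def by blast
  have \<sigma>_lt: "\<sigma> ! i < N" if "i < length \<sigma>" for i
    using assms(3) that by simp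
  define \<rho> where "\<rho> i = (if i < length \<sigma> then \<sigma> ! i else N + (i - length \<sigma>))" for i
  have "inj \<rho>"
  proof (rule injI)
    fix x y assume \<rho>: "\<rho> x = \<rho> y"
    show "x = y"
    proof (cases "x < length \<sigma>"; cases "y < length \<sigma>")
      assume "x < length \<sigma>" "y < length \<sigma>"
      then show ?thesis using \<rho> nth_eq_iff_index_eq[OF assms(2)] by (simp add: \<rho>_def)
    qed (use \<rho> \<sigma>_lt[of x] \<sigma>_lt[of y] in \<open>auto simp: \<rho>_def\<close>)
  qed
  moreover have "prefix_env v w \<circ> \<rho> = prefix_env (map ((!) v) \<sigma>) w" if "length v = N" for v
  proof
    fix i
    show "(prefix_env v w \<circ> \<rho>) i = prefix_env (map ((!) v) \<sigma>) w i"
      using \<sigma>_lt[of i] that by (cases "i < length \<sigma>") (auto simp: prefix_env_def \<rho>_def)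
  qed
  ultimately have "v \<in> {v. map ((!) v) \<sigma> \<in> S} \<longleftrightarrow> sat F Rl (prefix_env v w) (rename_fm \<rho> \<phi>)"
    if "length v = N" for v
    using \<phi> that by (simp add: sat_rename_fm)
  then show ?thesis unfolding definable_param_def by blast
qed

lemma definable_param_project_last:
  fixes F :: "'f \<Rightarrow> 'a list \<Rightarrow> 'a" and Rl :: "'r \<Rightarrow> 'a list \<Rightarrow> bool"
  assumes "definable_param F Rl (Suc n) A"
  shows "definable_param F Rl n {xs. \<exists>y. xs @ [y] \<in> A}"
proof -
  obtain \<phi> :: "('f, 'r) fm" and w
    where \<phi>: "\<And>xs. length xs = Suc n \<Longrightarrow> xs \<in> A \<longleftrightarrow> sat F Rl (prefix_env xs w) \<phi>"
    using assms unfolding definable_param_def by blast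
  \<comment> \<open>shifting the parameters up by one frees variable n for the quantifier\<close>
  have "(prefix_env xs (\<lambda>j. w (j - 1)))(n := y) = prefix_env (xs @ [y]) w"
    if "length xs = n" for xs y
    by (auto simp: fun_eq_iff prefix_env_def nth_append that)
  then have "xs \<in> {xs. \<exists>y. xs @ [y] \<in> A} \<longleftrightarrow> sat F Rl (prefix_env xs (\<lambda>j. w (j - 1))) (Ex n \<phi>)"
    if "length xs = n" for xs
    using \<phi> that by simp
  then show ?thesis unfolding definable_param_def by blast
qed

lemma definable_param_project:
  "definable_param F Rl (n + m) A \<Longrightarrow>
    definable_param F Rl n {xs. \<exists>ys. length ys = m \<and> xs @ ys \<in> A}"
proof (induction m arbitrary: A)
  case (Suc m)
  have "{xs. \<exists>ys. length ys = Suc m \<and> xs @ ys \<in> A} =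
      {xs. \<exists>ys. length ys = m \<and> xs @ ys \<in> {zs. \<exists>y. zs @ [y] \<in> A}}"
    by (auto simp: length_Suc_conv_rev)
  moreover have "definable_param F Rl (n + m) {zs. \<exists>y. zs @ [y] \<in> A}"
    using definable_param_project_last[of F Rl "n + m" A] Suc.prems by simp
  ultimately show ?case using Suc.IH by (simp only:)
qed simp

lemma map_nth_upt_append:
  "length pre = p \<Longrightarrow> q = p + length mid \<Longrightarrow> map ((!) (pre @ mid @ suf)) [p..<q] = mid"
  by (rule nth_equalityI) (auto simp: nth_append)

definition linked_by ::
  "nat \<Rightarrow> nat \<Rightarrow> nat \<Rightarrow> nat \<Rightarrow> 'a list set \<Rightarrow> 'a list set \<Rightarrow> 'a list set \<Rightarrow> 'a list set" where
  "linked_by l k a b H G W = {s @ r | s r. length s = l \<and> length r = k \<and>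
     (\<exists>y x. length y = a \<and> length x = b \<and> s @ y \<in> H \<and> r @ x \<in> G \<and> y @ x \<in> W)}"

lemma append_mem_appends_iff:
  assumes "\<And>s' r'. P s' r' \<Longrightarrow> length s' = length s"
  shows "s @ r \<in> {s' @ r' | s' r'. P s' r'} \<longleftrightarrow> P s r"
proof
  assume "s @ r \<in> {s' @ r' | s' r'. P s' r'}"
  then obtain s' r' where "s @ r = s' @ r'" "P s' r'" by blast
  moreover from this have "s = s' \<and> r = r'"
    using assms[of s' r'] append_eq_append_conv[of s s' r r'] by simp
  ultimately show "P s r" by simp
qed blast

lemma append_mem_linked_by_iff:
  "length s = l \<Longrightarrow> s @ r \<in> linked_by l k a b H G W \<longleftrightarrow> length r = k \<and>
    (\<exists>y x. length y = a \<and> length x = b \<and> s @ y \<in> H \<and> r @ x \<in> G \<and> y @ x \<in> W)"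
  unfolding linked_by_def by (subst append_mem_appends_iff) auto

lemma definable_linked_by:
  assumes H: "definable F Rl (l + a) H" and G: "definable F Rl (k + b) G"
    and W: "definable F Rl (a + b) W"
  shows "definable F Rl (l + k) (linked_by l k a b H G W)" (is "definable F Rl _ ?S")
proof -
  \<comment> \<open>T lives on tuples s @ r @ y @ x; the \<sigma>'s pick out the coordinates of H, G and W\<close>
  define \<sigma>H where "\<sigma>H = [0..<l] @ [l+k..<l+k+a]"
  define \<sigma>G where "\<sigma>G = [l..<l+k] @ [l+k+a..<l+k+(a+b)]"
  define \<sigma>W where "\<sigma>W = [l+k..<l+k+(a+b)]"
  define T where "T = {v. map ((!) v) \<sigma>H \<in> H} \<inter> {v. map ((!) v) \<sigma>G \<in> G} \<inter>
    {v. map ((!) v) \<sigma>W \<in> W}"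
  have "definable_param F Rl (l + k + (a + b)) T"
    unfolding T_def using H G W
    by (intro definable_param_Int definable_param_preimage)
      (auto simp: definable_iff_definable_param \<sigma>H_def \<sigma>G_def \<sigma>W_def)
  then have T_proj: "definable_param F Rl (l + k) {u. \<exists>z. length z = a + b \<and> u @ z \<in> T}"
    by (rule definable_param_project)
  have T_mem: "s @ r @ y @ x \<in> T \<longleftrightarrow> s @ y \<in> H \<and> r @ x \<in> G \<and> y @ x \<in> W"
    if "length s = l" "length r = k" "length y = a" "length x = b" for s r y x
    using that map_nth_upt_append[of "[]" 0 l s] map_nth_upt_append[of s l "l+k" r]
      map_nth_upt_append[of "s @ r" "l+k" "l+k+a" y]
      map_nth_upt_append[of "s @ r @ y" "l+k+a" "l+k+(a+b)" x "[]"]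
      map_nth_upt_append[of "s @ r" "l+k" "l+k+(a+b)" "y @ x" "[]"]
    by (simp add: T_def \<sigma>H_def \<sigma>G_def \<sigma>W_def)
  have "?S = {u. length u = l + k} \<inter> {u. \<exists>z. length z = a + b \<and> u @ z \<in> T}"
  proof (intro set_eqI iffI)
    fix u assume "u \<in> ?S"
    then show "u \<in> {u. length u = l + k} \<inter> {u. \<exists>z. length z = a + b \<and> u @ z \<in> T}"
      unfolding linked_by_def using T_mem by (auto intro!: exI[of _ "_ @ _"])
  next
    fix u assume u: "u \<in> {u. length u = l + k} \<inter> {u. \<exists>z. length z = a + b \<and> u @ z \<in> T}"
    then obtain z where "length z = a + b" "u @ z \<in> T" by blast
    then have z: "length z = a + b" "take l u @ drop l u @ take a z @ drop a z \<in> T"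
      by (simp_all del: append_assoc add: append_assoc[symmetric])
    then have "take l u @ take a z \<in> H" "drop l u @ drop a z \<in> G" "take a z @ drop a z \<in> W"
      using u T_mem[of "take l u" "drop l u" "take a z" "drop a z"] by simp_all
    moreover have "length (take l u) = l" "length (drop l u) = k"
      "length (take a z) = a" "length (drop a z) = b"
      using u z(1) by simp_all
    ultimately have "take l u @ drop l u \<in> ?S"
      using append_mem_linked_by_iff[of "take l u" l "drop l u"] by blast
    then show "u \<in> ?S" by simp
  qed
  with T_proj show ?thesis
    unfolding definable_iff_definable_param definable_param_def by auto
qed

lemma append_mem_lprod_iff:
  "A \<subseteq> {xs. length xs = length s} \<Longrightarrow> s @ y \<in> lprod A B \<longleftrightarrow> s \<in> A \<and> y \<in> B"
  by (auto simp: lprod_def append_eq_append_conv)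

lemma linked_by_subset_lprod:
  assumes "H \<subseteq> lprod (lpow Z l) DY" "G \<subseteq> lprod (lpow R k) DX"
  shows "linked_by l k a b H G W \<subseteq> lprod (lpow Z l) (lpow R k)"
proof -
  have "s \<in> lpow Z l" if "s @ y \<in> H" "length s = l" for s y
    using assms(1) that append_mem_lprod_iff[of "lpow Z l" s y DY] by (auto simp: lpow_def)
  moreover have "r \<in> lpow R k" if "r @ x \<in> G" "length r = k" for r x
    using assms(2) that append_mem_lprod_iff[of "lpow R k" r x DX] by (auto simp: lpow_def)
  ultimately show ?thesis unfolding linked_by_def lprod_def by blast
qed

lemma fibre_linked_by:
  assumes H: "H \<subseteq> lprod (lpow Z l) DY" and G: "G \<subseteq> lprod (lpow R k) DX"
    and DY: "\<And>y. y \<in> DY \<Longrightarrow> length y = a" and DX: "\<And>x. x \<in> DX \<Longrightarrow> length x = b"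
    and s: "length s = l"
  shows "{r. s @ r \<in> linked_by l k a b H G W} =
    {r \<in> lpow R k. \<exists>y \<in> {y. s @ y \<in> H}. \<exists>x \<in> {x. r @ x \<in> G}. y @ x \<in> W}"
proof -
  have "length y = a" if "s @ y \<in> H" for y
    using H that s DY append_mem_lprod_iff[of "lpow Z l" s y DY] by (auto simp: lpow_def)
  moreover have "r \<in> lpow R k \<and> length x = b" if "r @ x \<in> G" "length r = k" for r x
    using G that DX append_mem_lprod_iff[of "lpow R k" r x DX] by (auto simp: lpow_def)
  ultimately show ?thesis
    unfolding append_mem_linked_by_iff[OF s] by (auto simp: lpow_def) blast
qed

lemma finite_fibres:
  fixes Z R :: "'a set"
  assumes fo: "fully_orthogonal F Rl Z R"
    and S: "definable F Rl (m + n) S" "S \<subseteq> lprod (lpow Z m) (lpow R n)"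
  shows "finite ((\<lambda>t. {y. t @ y \<in> S}) ` lpow Z m)"
proof -
  obtain P where P: "finite P" "\<forall>(U, V) \<in> P. definable F Rl m U \<and> U \<subseteq> lpow Z m \<and>
      definable F Rl n V \<and> V \<subseteq> lpow R n" "S = (\<Union>(U, V) \<in> P. lprod U V)"
    using fo[unfolded fully_orthogonal_def, rule_format, OF conjI[OF S]] by blast
  define union_snd where "union_snd Q = (\<Union>(U, V) \<in> Q. V)"
    for Q :: "('a list set \<times> 'a list set) set"
  have fibre_eq: "{y. t @ y \<in> S} = union_snd {(U, V) \<in> P. t \<in> U}" if "t \<in> lpow Z m" for t
  proof -
    have "t @ y \<in> lprod U V \<longleftrightarrow> t \<in> U \<and> y \<in> V" if "(U, V) \<in> P" for U V y
      using P(2) that \<open>t \<in> lpow Z m\<close> by (intro append_mem_lprod_iff) (auto simp: lpow_def)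
    then show ?thesis
      unfolding P(3) union_snd_def by blast
  qed
  have "{(U, V) \<in> P. t \<in> U} \<in> Pow P" for t by blast
  with fibre_eq have "(\<lambda>t. {y. t @ y \<in> S}) ` lpow Z m \<subseteq> union_snd ` Pow P" by blast
  then show ?thesis using P(1) by (meson finite_Pow_iff finite_imageI finite_subset)
qed

lemma finite_image_definable_family:
  assumes fo: "fully_orthogonal F Rl Z R"
    and sub: "\<forall>t \<in> lpow Z m. Xt t \<subseteq> lpow R n"
    and df: "definable F Rl (m + n) (\<Union>t \<in> lpow Z m. lprod {t} (Xt t))"
  shows "finite (Xt ` lpow Z m)"
proof -
  let ?S = "\<Union>t \<in> lpow Z m. lprod {t} (Xt t)"
  have "?S \<subseteq> lprod (lpow Z m) (lpow R n)"
    using sub by (auto simp: lprod_def)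
  then have "finite ((\<lambda>t. {y. t @ y \<in> ?S}) ` lpow Z m)"
    by (rule finite_fibres[OF fo df])
  moreover have "{y. t @ y \<in> ?S} = Xt t" if "t \<in> lpow Z m" for t
    using that by (auto simp: lprod_def lpow_def)
  ultimately show ?thesis by (metis (no_types, lifting) image_cong)
qed

lemma equiv_class_eq_if_in_quotient: "equiv A r \<Longrightarrow> X \<in> A // r \<Longrightarrow> x \<in> X \<Longrightarrow> r `` {x} = X"
  by (metis Image_singleton_iff equiv_class_eq quotientE)

lemma quotient_subset_eq_image:
  assumes eq: "equiv D E" and Cs: "Cs \<subseteq> D // E" and cls: "cls ` Rs = D // E"
    and c: "c \<noteq> {}" and Q: "\<And>y x. y \<in> c \<Longrightarrow> x \<in> D \<Longrightarrow> Q y x \<longleftrightarrow> E `` {x} \<in> Cs"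
  shows "Cs = cls ` {r \<in> Rs. \<exists>y \<in> c. \<exists>x \<in> cls r. Q y x}"
proof (intro equalityI subsetI)
  fix e assume e: "e \<in> Cs"
  then have e_class: "e \<in> D // E" using Cs by blast
  then have "e \<in> cls ` Rs" using cls by simp
  then obtain r where r: "r \<in> Rs" "cls r = e" by blast
  obtain y where y: "y \<in> c" using c by blast
  obtain x where x: "x \<in> e" using in_quotient_imp_non_empty[OF eq e_class] by blast
  have "x \<in> D" using in_quotient_imp_subset[OF eq e_class] x by blast
  then have "Q y x" using Q[OF y] e equiv_class_eq_if_in_quotient[OF eq e_class x] by simp
  with r x y show "e \<in> cls ` {r \<in> Rs. \<exists>y \<in> c. \<exists>x \<in> cls r. Q y x}" by blast
next
  fix e assume "e \<in> cls ` {r \<in> Rs. \<exists>y \<in> c. \<exists>x \<in> cls r. Q y x}"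
  then obtain r y x where "r \<in> Rs" "e = cls r" "y \<in> c" "x \<in> e" "Q y x" by blast
  moreover from this have e_class: "e \<in> D // E" using cls by blast
  moreover from calculation have "x \<in> D" using in_quotient_imp_subset[OF eq e_class] by blast
  ultimately show "e \<in> Cs" using Q equiv_class_eq_if_in_quotient[OF eq e_class] by metis
qed

lemma internalE:
  assumes "internal F Rl Z R A pat D E"
  obtains k G where "equiv D E" "\<And>x. x \<in> D \<Longrightarrow> length x = length pat"
    "definable F Rl (k + length pat) G" "G \<subseteq> lprod (lpow A k) D"
    "(\<lambda>r. {x. r @ x \<in> G}) ` lpow A k = D // E"
proof -
  obtain k G where D: "D \<subseteq> sortprod Z R pat" "equiv D E" and G: "definable F Rl (k + length pat) G"
    "G \<subseteq> lprod (lpow A k) D" "\<forall>s \<in> lpow A k. {y. s @ y \<in> G} \<in> D // E"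
    "\<forall>c \<in> D // E. \<exists>s \<in> lpow A k. {y. s @ y \<in> G} = c"
    using assms unfolding internal_def eq_set_def by blast
  have "(\<lambda>r. {x. r @ x \<in> G}) ` lpow A k = D // E"
  proof (intro equalityI image_subsetI subsetI)
    show "{x. r @ x \<in> G} \<in> D // E" if "r \<in> lpow A k" for r
      using G(3) that by blast
  next
    fix c assume "c \<in> D // E"
    from bspec[OF G(4) this] obtain r where "r \<in> lpow A k" "{y. r @ y \<in> G} = c" ..
    then show "c \<in> (\<lambda>r. {x. r @ x \<in> G}) ` lpow A k" by (intro image_eqI[OF sym])
  qed
  moreover have "length x = length pat" if "x \<in> D" for x
    using D(1) that by (auto simp: sortprod_def)
  ultimately show ?thesis using that D(2) G(1,2) by blast
qed

lemma eq_family_pullback: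
  fixes Z R :: "'a set"
  assumes iX: "internal F Rl Z R R pX DX EqX" and iY: "internal F Rl Z R Z pY DY EqY"
    and fam: "eq_family F Rl pY DY EqY pX DX EqX Xf"
  obtains l k S G where "definable F Rl (l + k) S" "S \<subseteq> lprod (lpow Z l) (lpow R k)"
    "Xf ` (DY // EqY) \<subseteq> (\<lambda>Rs. (\<lambda>r. {x. r @ x \<in> G}) ` Rs) ` (\<lambda>s. {r. s @ r \<in> S}) ` lpow Z l"
proof -
  obtain k G where eqX: "equiv DX EqX" and DX_len: "\<And>x. x \<in> DX \<Longrightarrow> length x = length pX"
    and G: "definable F Rl (k + length pX) G" "G \<subseteq> lprod (lpow R k) DX"
      "(\<lambda>r. {x. r @ x \<in> G}) ` lpow R k = DX // EqX"
    using iX by (rule internalE) blast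
  obtain l H where eqY: "equiv DY EqY" and DY_len: "\<And>y. y \<in> DY \<Longrightarrow> length y = length pY"
    and H: "definable F Rl (l + length pY) H" "H \<subseteq> lprod (lpow Z l) DY"
      "(\<lambda>s. {y. s @ y \<in> H}) ` lpow Z l = DY // EqY"
    using iY by (rule internalE) blast
  define W where "W = {y @ x | y x. y \<in> DY \<and> x \<in> DX \<and> EqX `` {x} \<in> Xf (EqY `` {y})}"
  have W: "definable F Rl (length pY + length pX) W"
    and Xf_sub: "\<And>c. c \<in> DY // EqY \<Longrightarrow> Xf c \<subseteq> DX // EqX"
    using fam unfolding eq_family_def W_def by auto
  have W_mem: "y @ x \<in> W \<longleftrightarrow> EqX `` {x} \<in> Xf (EqY `` {y})" if "y \<in> DY" "x \<in> DX" for y x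
    unfolding W_def using that DY_len by (subst append_mem_appends_iff) auto
  define S where "S = linked_by l k (length pY) (length pX) H G W"
  have "definable F Rl (l + k) S"
    unfolding S_def using H(1) G(1) W by (rule definable_linked_by)
  moreover have "S \<subseteq> lprod (lpow Z l) (lpow R k)"
    unfolding S_def using H(2) G(2) by (rule linked_by_subset_lprod)
  moreover have "Xf c \<in> (\<lambda>Rs. (\<lambda>r. {x. r @ x \<in> G}) ` Rs) ` (\<lambda>s. {r. s @ r \<in> S}) ` lpow Z l"
    if c: "c \<in> DY // EqY" for c
  proof -
    have "c \<in> (\<lambda>s. {y. s @ y \<in> H}) ` lpow Z l" using c H(3) by simp
    then obtain s where s: "s \<in> lpow Z l" "c = {y. s @ y \<in> H}" by blast
    have "Xf c = (\<lambda>r. {x. r @ x \<in> G}) ` {r \<in> lpow R k. \<exists>y \<in> c. \<exists>x \<in> {x. r @ x \<in> G}. y @ x \<in> W}"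
    proof (rule quotient_subset_eq_image[OF eqX Xf_sub[OF c] G(3)])
      show "c \<noteq> {}" using in_quotient_imp_non_empty[OF eqY c] .
      show "y @ x \<in> W \<longleftrightarrow> EqX `` {x} \<in> Xf c" if "y \<in> c" "x \<in> DX" for y x
        using W_mem[of y x] that in_quotient_imp_subset[OF eqY c]
          equiv_class_eq_if_in_quotient[OF eqY c that(1)] by auto
    qed
    also have "\<dots> = (\<lambda>r. {x. r @ x \<in> G}) ` {r. s @ r \<in> S}"
      using fibre_linked_by[OF H(2) G(2) DY_len DX_len, of s W] s by (simp add: S_def lpow_def)
    finally show ?thesis using s(1) by simp
  qed
  ultimately show ?thesis by (intro that image_subsetI)
qed

lemma finite_image_eq_family:
  fixes Z R :: "'a set"
  assumes fo: "fully_orthogonal F Rl Z R"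
    and iX: "internal F Rl Z R R pX DX EqX" and iY: "internal F Rl Z R Z pY DY EqY"
    and fam: "eq_family F Rl pY DY EqY pX DX EqX Xf"
  shows "finite (Xf ` (DY // EqY))"
proof -
  obtain l k S G where "definable F Rl (l + k) S" "S \<subseteq> lprod (lpow Z l) (lpow R k)" and
    Xf: "Xf ` (DY // EqY) \<subseteq> (\<lambda>Rs. (\<lambda>r. {x. r @ x \<in> G}) ` Rs) ` (\<lambda>s. {r. s @ r \<in> S}) ` lpow Z l"
    using eq_family_pullback[OF iX iY fam] .
  then have "finite ((\<lambda>s. {r. s @ r \<in> S}) ` lpow Z l)"
    by (intro finite_fibres[OF fo])
  with Xf show ?thesis by (meson finite_imageI finite_subset)
qed

theorem lemma2p2:
  fixes F :: "'f \<Rightarrow> 'a list \<Rightarrow> 'a" and Rl :: "'r \<Rightarrow> 'a list \<Rightarrow> bool"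
    and Z R :: "'a set"
  assumes "definable F Rl 1 {[z] | z. z \<in> Z}"
    and "definable F Rl 1 {[r] | r. r \<in> R}"
    and "stably_embedded F Rl Z"
    and "stably_embedded F Rl R"
    and "fully_orthogonal F Rl Z R"
  shows "(\<forall>m n (Xt :: 'a list \<Rightarrow> 'a list set).
            (\<forall>t \<in> lpow Z m. Xt t \<subseteq> lpow R n) \<and>
            definable F Rl (m + n) (\<Union>t \<in> lpow Z m. lprod {t} (Xt t))
            \<longrightarrow> finite (Xt ` lpow Z m))
       \<and> (\<forall>pX DX EqX pY DY EqY (Xf :: 'a list set \<Rightarrow> 'a list set set).
            internal F Rl Z R R pX DX EqX \<and> internal F Rl Z R Z pY DY EqY \<and>
            eq_family F Rl pY DY EqY pX DX EqX Xf
            \<longrightarrow> finite (Xf ` (DY // EqY)))"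
  using finite_image_definable_family[OF assms(5)] finite_image_eq_family[OF assms(5)] by blast

end
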